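(* For an integer $k \geq -1$ and real $b \geq 0$ define \[ J_k = J_k(b) = \int_{-1}^{1} (1-x^2)^{k/2} e^{bx}\, \mathrm{d}x. \] Then for every integer $d \geq 2$ and every $b \geq 0$: (a) $b^2 J_{d+1} = -d(d+1) J_{d-1} + (d+1)(d-1) J_{d-3}$; (b) $\dfrac{J_{d-3}}{J_{d-1}} \geq \dfrac{d}{d-1}\left(\dfrac12 + \sqrt{\dfrac14 + \dfrac{b^2}{d(d+2)}}\right)$; (c) $\dfrac{J_{d-1}}{J_{d+1}} \leq \dfrac{d+2}{d+1}\left(\dfrac12 + \sqrt{\dfrac14 + \dfrac{b^2}{d(d+2)}}\right)$; (d) $J_{d+1} J_{d-3} \geq J_{d-1}^2 \dfrac{d(d+1)}{(d-1)(d+2)}$. *)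

theory Defs
  imports "HOL-Analysis.Analysis"
begin

text \<open>J_k(b) = integral over [-1,1] of (1-x^2)^(k/2) e^(bx) dx, for integers k >= -1.
  For k = -1 the integrand is improper at the endpoints but Lebesgue (hence
  Henstock-Kurzweil) integrable; the value at x = +-1 is irrelevant.\<close>
definition J :: "int \<Rightarrow> real \<Rightarrow> real" where
  "J k b = integral {-1..1} (\<lambda>x::real. (1 - x\<^sup>2) powr (real_of_int k / 2) * exp (b * x))"

end

theory Submission
  imports Defs
begin

text \<open>Put \<open>d = 2p + 1\<close>, \<open>A(b) = J\<^sub>d\<^sub>-\<^sub>1(b)\<close>, \<open>B(b) = J\<^sub>d\<^sub>+\<^sub>1(b)\<close>; the argument works for every real
  \<open>p > 0\<close>. Integration by parts in \<open>x\<close>, together with differentiation under the integral sign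
  in \<open>b\<close>, gives \<open>b B = (d+1) A'\<close> and \<open>b B' = (d+1) A - (d+2) B\<close>; the same two identities one
  step lower give the recurrence (a). For the Turan gap
  \<open>g = (d+2)(d(d+1) A B + b\<^sup>2 B\<^sup>2) - d(d+1)\<^sup>2 A\<^sup>2\<close> they yield
  \<open>b g' + (d+2) g = 4(d+1) b\<^sup>2 A B \<ge> 0\<close>, so \<open>b\<^sup>d\<^sup>+\<^sup>2 g(b)\<close> is nondecreasing and \<open>g \<ge> 0\<close>.
  Using (a), \<open>g\<close> is a positive multiple of the difference of the two sides of (d), and of a
  quadratic in the ratio \<open>A/B\<close> (resp. \<open>J\<^sub>d\<^sub>-\<^sub>3/J\<^sub>d\<^sub>-\<^sub>1\<close>) whose larger root gives (c) (resp. (b)).\<close>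

definition J_integrand :: "real \<Rightarrow> real \<Rightarrow> real \<Rightarrow> real" where
  "J_integrand p b x = (1 - x\<^sup>2) powr p * exp (b * x)"

definition J_pow :: "real \<Rightarrow> real \<Rightarrow> real" where
  "J_pow p b = integral {-1..1} (J_integrand p b)"

definition J_moment :: "real \<Rightarrow> real \<Rightarrow> real" where
  "J_moment p b = integral {-1..1} (\<lambda>x. x * J_integrand p b x)"

lemma J_eq_J_pow: "J k b = J_pow (real_of_int k / 2) b"
  unfolding J_def J_pow_def J_integrand_def ..

lemma continuous_on_J_integrand:
  assumes "p > 0"
  shows "continuous_on {-1..1} (J_integrand p b)"
proof -
  have "continuous_on {-1..1} (\<lambda>x::real. (1 - x\<^sup>2) powr p)"
    by (rule continuous_on_powr')
      (use assms in \<open>auto intro!: continuous_intros simp: abs_square_le_1\<close>)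
  then show ?thesis
    unfolding J_integrand_def by (rule continuous_on_mult) (intro continuous_intros)
qed

lemma J_pow_has_integral:
  "p > 0 \<Longrightarrow> (J_integrand p b has_integral J_pow p b) {-1..1}"
  unfolding J_pow_def
  by (intro integrable_integral integrable_continuous_interval continuous_on_J_integrand)

lemma J_moment_has_integral:
  "p > 0 \<Longrightarrow> ((\<lambda>x. x * J_integrand p b x) has_integral J_moment p b) {-1..1}"
  unfolding J_moment_def
  by (intro integrable_integral integrable_continuous_interval continuous_intros
      continuous_on_J_integrand)

lemma J_integrand_endpoints [simp]: "J_integrand p b 1 = 0" "J_integrand p b (-1) = 0"
  by (simp_all add: J_integrand_def)

lemma one_minus_square_pos: "x \<in> {-1<..<1} \<Longrightarrow> 1 - x\<^sup>2 > (0::real)"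
  by (auto simp: abs_square_less_1 less_iff_diff_less_0[symmetric])

lemma J_integrand_mult_base:
  "x \<in> {-1<..<1} \<Longrightarrow> (1 - x\<^sup>2) * J_integrand (p - 1) b x = J_integrand p b x"
  using one_minus_square_pos[of x] by (simp add: J_integrand_def powr_mult_base)

lemma J_integrand_has_derivative:
  assumes "x \<in> {-1<..<1}"
  shows "(J_integrand p b has_real_derivative
           b * J_integrand p b x - 2 * p * (x * J_integrand (p - 1) b x)) (at x)"
  unfolding J_integrand_def using one_minus_square_pos[OF assms]
  by (auto intro!: derivative_eq_intros simp: algebra_simps)

lemma J_pow_succ_recurrence:
  assumes "p > 0"
  shows "b * J_pow (p + 1) b = 2 * (p + 1) * J_moment p b"
proof -
  let ?f = "\<lambda>x. b * J_integrand (p + 1) b x - 2 * (p + 1) * (x * J_integrand p b x)"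
  have "(?f has_integral J_integrand (p + 1) b 1 - J_integrand (p + 1) b (-1)) {-1..1}"
  proof (rule fundamental_theorem_of_calculus_interior)
    show "continuous_on {-1..1} (J_integrand (p + 1) b)"
      using assms by (intro continuous_on_J_integrand) simp
  next
    fix x :: real assume "x \<in> {-1<..<1}"
    then show "(J_integrand (p + 1) b has_vector_derivative ?f x) (at x)"
      using J_integrand_has_derivative[of x "p + 1" b]
      by (simp add: has_real_derivative_iff_has_vector_derivative)
  qed simp
  then have "(?f has_integral 0) {-1..1}"
    by simp
  moreover have "(?f has_integral b * J_pow (p + 1) b - 2 * (p + 1) * J_moment p b) {-1..1}"
    using assms by (intro has_integral_diff has_integral_mult_right J_pow_has_integral
        J_moment_has_integral) simp_all
  ultimately have "0 = b * J_pow (p + 1) b - 2 * (p + 1) * J_moment p b"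
    by (rule has_integral_unique)
  then show ?thesis
    by simp
qed

text \<open>For \<open>p < 1\<close> the integrand \<open>J_integrand (p - 1) b\<close> is unbounded at \<open>\<plusminus>1\<close>; its integrability
  comes out of the fundamental theorem of calculus applied to \<open>x * J_integrand p b x\<close>.\<close>

lemma J_pow_pred_recurrence:
  assumes "p > 0"
  shows "2 * p * J_pow (p - 1) b = (2 * p + 1) * J_pow p b + b * J_moment p b"
proof -
  let ?f = "\<lambda>x. (2 * p + 1) * J_integrand p b x + b * (x * J_integrand p b x)
                 - 2 * p * J_integrand (p - 1) b x"
  have "(?f has_integral 1 * J_integrand p b 1 - (-1) * J_integrand p b (-1)) {-1..1}"
  proof (rule fundamental_theorem_of_calculus_interior)
    show "continuous_on {-1..1} (\<lambda>x. x * J_integrand p b x)"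
      using assms by (intro continuous_intros continuous_on_J_integrand)
  next
    fix x :: real assume x: "x \<in> {-1<..<1}"
    have "((\<lambda>x. x * J_integrand p b x) has_real_derivative
           x * (b * J_integrand p b x - 2 * p * (x * J_integrand (p - 1) b x))
           + J_integrand p b x) (at x)"
      using J_integrand_has_derivative[OF x] by (auto intro!: derivative_eq_intros)
    moreover have "x * (b * J_integrand p b x - 2 * p * (x * J_integrand (p - 1) b x))
           + J_integrand p b x = ?f x"
      unfolding J_integrand_mult_base[OF x, of p b, symmetric]
      by (simp add: algebra_simps power2_eq_square)
    ultimately show "((\<lambda>x. x * J_integrand p b x) has_vector_derivative ?f x) (at x)"
      by (simp add: has_real_derivative_iff_has_vector_derivative)
  qed simp
  then have "(?f has_integral 0) {-1..1}"
    by simp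
  moreover have "((\<lambda>x. (2 * p + 1) * J_integrand p b x + b * (x * J_integrand p b x)) has_integral
                  (2 * p + 1) * J_pow p b + b * J_moment p b) {-1..1}"
    using assms by (intro has_integral_add has_integral_mult_right J_pow_has_integral
        J_moment_has_integral)
  ultimately have "((\<lambda>x. ((2 * p + 1) * J_integrand p b x + b * (x * J_integrand p b x)
                              - ?f x) / (2 * p)) has_integral
                     ((2 * p + 1) * J_pow p b + b * J_moment p b - 0) / (2 * p)) {-1..1}"
    by (intro has_integral_divide has_integral_diff)
  moreover have "(\<lambda>x. ((2 * p + 1) * J_integrand p b x + b * (x * J_integrand p b x) - ?f x)
                     / (2 * p)) = J_integrand (p - 1) b"
    using assms by (simp add: fun_eq_iff)
  ultimately have "J_pow (p - 1) b = ((2 * p + 1) * J_pow p b + b * J_moment p b) / (2 * p)"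
    unfolding J_pow_def by (simp add: integral_unique)
  then show ?thesis
    using assms by simp
qed

lemma J_pow_three_term_recurrence:
  assumes "p > 0"
  shows "b\<^sup>2 * J_pow (p + 1) b
           = 2 * p * (2 * p + 2) * J_pow (p - 1) b - (2 * p + 1) * (2 * p + 2) * J_pow p b"
proof -
  have "b\<^sup>2 * J_pow (p + 1) b = 2 * (p + 1) * (b * J_moment p b)"
    using J_pow_succ_recurrence[OF assms, of b] by (simp add: power2_eq_square)
  also have "b * J_moment p b = 2 * p * J_pow (p - 1) b - (2 * p + 1) * J_pow p b"
    using J_pow_pred_recurrence[OF assms, of b] by simp
  finally show ?thesis
    by (simp add: algebra_simps)
qed

lemma J_pow_pos:
  assumes "p > 0"
  shows "J_pow p b > 0"
proof -
  have nonneg: "\<And>x. J_integrand p b x \<ge> 0"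
    by (simp add: J_integrand_def)
  have "J_pow p b = 0 \<longleftrightarrow> (\<forall>x\<in>{-1..1}. J_integrand p b x = 0)"
    unfolding J_pow_def
    by (rule integral_eq_0_iff) (use continuous_on_J_integrand[OF assms] nonneg in auto)
  moreover have "J_integrand p b 0 \<noteq> 0" "(0::real) \<in> {-1..1}"
    by (simp_all add: J_integrand_def)
  ultimately have "J_pow p b \<noteq> 0"
    by blast
  moreover have "J_pow p b \<ge> 0"
    using has_integral_nonneg[OF J_pow_has_integral[OF assms]] nonneg by blast
  ultimately show ?thesis
    by simp
qed

lemma J_pow_has_derivative:
  assumes "p > 0"
  shows "((\<lambda>b. J_pow p b) has_real_derivative J_moment p b) (at b)"
  unfolding J_pow_def J_moment_def
proof (rule leibniz_rule_field_derivative[where fx = "\<lambda>b x. x * J_integrand p b x"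
      and U = UNIV, unfolded cbox_interval])
  have weight: "continuous_on (UNIV \<times> {-1..1}) (\<lambda>z::real \<times> real. (1 - (snd z)\<^sup>2) powr p)"
    by (rule continuous_on_powr')
      (use assms in \<open>auto intro!: continuous_intros simp: abs_square_le_1\<close>)
  show "continuous_on (UNIV \<times> {-1..1}) (\<lambda>(b, x). x * J_integrand p b x)"
    unfolding J_integrand_def split_beta
    by (intro continuous_on_mult[OF continuous_on_snd] continuous_on_mult[OF weight]
        continuous_intros)
  show "J_integrand p b' integrable_on {-1..1}" for b'
    using J_pow_has_integral[OF assms] by blast
  show "((\<lambda>b. J_integrand p b x) has_real_derivative x * J_integrand p b' x) (at b' within UNIV)"
    for b' x
    unfolding J_integrand_def by (auto intro!: derivative_eq_intros)
qed simp_all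

definition turan_gap :: "real \<Rightarrow> real \<Rightarrow> real \<Rightarrow> real \<Rightarrow> real" where
  "turan_gap D t A B = (D + 2) * (D * (D + 1) * A * B + t\<^sup>2 * B\<^sup>2) - D * (D + 1)\<^sup>2 * A\<^sup>2"

lemma turan_gap_has_derivative:
  fixes A B :: "real \<Rightarrow> real"
  assumes "(A has_real_derivative K) (at t)" "(B has_real_derivative L) (at t)"
    and "t * B t = (D + 1) * K" "t * L = (D + 1) * A t - (D + 2) * B t"
  shows "\<exists>g'. ((\<lambda>t. turan_gap D t (A t) (B t)) has_real_derivative g') (at t) \<and>
           t * g' = 4 * (D + 1) * t\<^sup>2 * A t * B t - (D + 2) * turan_gap D t (A t) (B t)"
proof (intro exI conjI)
  show "((\<lambda>t. turan_gap D t (A t) (B t)) has_real_derivative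
          (D + 2) * (D * (D + 1) * (K * B t + A t * L) + 2 * t * (B t)\<^sup>2 + t\<^sup>2 * (2 * B t * L))
          - D * (D + 1)\<^sup>2 * (2 * A t * K)) (at t)"
    unfolding turan_gap_def using assms(1,2)
    by (auto intro!: derivative_eq_intros simp: algebra_simps)
  show "t * ((D + 2) * (D * (D + 1) * (K * B t + A t * L) + 2 * t * (B t)\<^sup>2 + t\<^sup>2 * (2 * B t * L))
          - D * (D + 1)\<^sup>2 * (2 * A t * K))
        = 4 * (D + 1) * t\<^sup>2 * A t * B t - (D + 2) * turan_gap D t (A t) (B t)"
    using assms(3,4) unfolding turan_gap_def by algebra
qed

text \<open>\<open>t powr c * g t\<close> is nondecreasing on \<open>[0, b]\<close> and vanishes at \<open>t = 0\<close>.\<close>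

lemma nonneg_of_euler_inequality:
  fixes g :: "real \<Rightarrow> real"
  assumes "c > 0" "b > 0" "continuous_on {0..b} g"
    and "\<And>t. 0 < t \<Longrightarrow> t < b \<Longrightarrow> \<exists>g'. (g has_real_derivative g') (at t) \<and> 0 \<le> t * g' + c * g t"
  shows "g b \<ge> 0"
proof -
  let ?F = "\<lambda>t. t powr c * g t"
  have "?F 0 \<le> ?F b"
  proof (rule DERIV_nonneg_imp_increasing_open[of 0 b ?F])
    fix t :: real assume t: "0 < t" "t < b"
    obtain g' where g': "(g has_real_derivative g') (at t)" "0 \<le> t * g' + c * g t"
      using assms(4)[OF t] by blast
    have "t powr c = t powr (c - 1) * t"
      using powr_add[of t "c - 1" 1] t(1) by simp
    have "(?F has_real_derivative c * t powr (c - 1) * g t + g' * t powr c) (at t)"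
      using has_real_derivative_powr[OF t(1)] g'(1) by (rule DERIV_mult)
    also have "c * t powr (c - 1) * g t + g' * t powr c = t powr (c - 1) * (t * g' + c * g t)"
      using \<open>t powr c = t powr (c - 1) * t\<close> by (simp add: algebra_simps)
    finally show "\<exists>y. (?F has_real_derivative y) (at t) \<and> 0 \<le> y"
      using g'(2) by auto
  next
    have "continuous_on {0..b} (\<lambda>t. t powr c)"
      using assms(1) by (intro continuous_on_powr' continuous_intros) auto
    then show "continuous_on {0..b} ?F"
      using assms(3) by (rule continuous_on_mult)
  qed (use assms(2) in simp)
  then show ?thesis
    using assms(2) by (simp add: zero_le_mult_iff)
qed

lemma turan_gap_nonneg:
  fixes A B K L :: "real \<Rightarrow> real"
  assumes "D \<ge> -1" "b \<ge> 0"
    and "\<And>t. (A has_real_derivative K t) (at t)"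
    and "\<And>t. (B has_real_derivative L t) (at t)"
    and "\<And>t. t * B t = (D + 1) * K t" "\<And>t. t * L t = (D + 1) * A t - (D + 2) * B t"
    and "\<And>t. 0 \<le> A t * B t"
  shows "turan_gap D b (A b) (B b) \<ge> 0"
proof -
  let ?g = "\<lambda>t. turan_gap D t (A t) (B t)"
  have g': "\<exists>g'. (?g has_real_derivative g') (at t) \<and>
              t * g' = 4 * (D + 1) * t\<^sup>2 * A t * B t - (D + 2) * ?g t" for t
    using assms by (intro turan_gap_has_derivative) auto
  show ?thesis
  proof (cases "b = 0")
    case True
    have "(D + 1) * A 0 = (D + 2) * B 0"
      using assms(6)[of 0] by simp
    moreover have "?g 0 = D * (D + 1) * A 0 * ((D + 2) * B 0 - (D + 1) * A 0)"
      unfolding turan_gap_def by (simp add: algebra_simps power2_eq_square)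
    ultimately show ?thesis
      using True by simp
  next
    case False
    show ?thesis
    proof (rule nonneg_of_euler_inequality[where c = "D + 2" and g = "\<lambda>t. turan_gap D t (A t) (B t)"])
      have "isCont ?g t" for t
        using g'[of t] DERIV_isCont by blast
      then show "continuous_on {0..b} ?g"
        by (simp add: continuous_at_imp_continuous_on)
      show "\<exists>g'. (?g has_real_derivative g') (at t) \<and> 0 \<le> t * g' + (D + 2) * ?g t"
        if "0 < t" "t < b" for t
        using g'[of t] assms(1) assms(7)[of t] by (auto simp: mult.assoc)
    qed (use assms(1,2) False in simp_all)
  qed
qed

lemma le_half_plus_sqrt:
  fixes c r w :: real
  assumes "c > 0" "c * (w\<^sup>2 - w) \<le> r"
  shows "w \<le> 1/2 + sqrt (1/4 + r / c)"
proof -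
  have "w\<^sup>2 - w \<le> r / c"
    using assms by (simp add: pos_le_divide_eq mult.commute)
  then have "(w - 1/2)\<^sup>2 \<le> 1/4 + r / c"
    by (simp add: power2_eq_square algebra_simps)
  then show ?thesis
    using real_le_rsqrt by fastforce
qed

lemma half_plus_sqrt_le:
  fixes c r t :: real
  assumes "c > 0" "t \<ge> 1/2" "r \<le> c * (t\<^sup>2 - t)"
  shows "1/2 + sqrt (1/4 + r / c) \<le> t"
proof -
  have "r / c \<le> t\<^sup>2 - t"
    using assms(1,3) by (simp add: pos_divide_le_eq mult.commute)
  then have "1/4 + r / c \<le> (t - 1/2)\<^sup>2"
    by (simp add: power2_eq_square algebra_simps)
  then have "sqrt (1/4 + r / c) \<le> sqrt ((t - 1/2)\<^sup>2)"
    by (rule real_sqrt_le_mono)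
  then show ?thesis
    using assms(2) by simp
qed

lemma turan_ratio_upper:
  fixes D b A B :: real
  assumes "D > 0" "B > 0" "turan_gap D b A B \<ge> 0"
  shows "A / B \<le> (D + 2) / (D + 1) * (1/2 + sqrt (1/4 + b\<^sup>2 / (D * (D + 2))))"
proof -
  define w where "w = (D + 1) * A / ((D + 2) * B)"
  have w: "(D + 1) * A = w * ((D + 2) * B)"
    unfolding w_def using assms(1,2) by simp
  have "turan_gap D b A B = (D + 2) * B\<^sup>2 * (b\<^sup>2 - D * (D + 2) * (w\<^sup>2 - w))"
    using w unfolding turan_gap_def by algebra
  moreover have "(D + 2) * B\<^sup>2 > 0"
    using assms(1,2) by simp
  ultimately have "D * (D + 2) * (w\<^sup>2 - w) \<le> b\<^sup>2"
    using assms(3) by (metis diff_ge_0_iff_ge zero_le_mult_iff not_less)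
  then have "w \<le> 1/2 + sqrt (1/4 + b\<^sup>2 / (D * (D + 2)))"
    using assms(1) by (intro le_half_plus_sqrt) simp_all
  then have "(D + 2) / (D + 1) * w \<le> (D + 2) / (D + 1) * (1/2 + sqrt (1/4 + b\<^sup>2 / (D * (D + 2))))"
    using assms(1) by (intro mult_left_mono) simp_all
  moreover have "A / B = (D + 2) / (D + 1) * w"
    unfolding w_def using assms(1,2) by simp
  ultimately show ?thesis
    by simp
qed

lemma turan_ratio_lower:
  fixes D b A B C :: real
  assumes "D > 1" "A > 0" "B \<ge> 0" "(D + 1) * (D - 1) * C = b\<^sup>2 * B + D * (D + 1) * A"
    and "turan_gap D b A B \<ge> 0"
  shows "C / A \<ge> D / (D - 1) * (1/2 + sqrt (1/4 + b\<^sup>2 / (D * (D + 2))))"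
proof -
  define t where "t = 1 + b\<^sup>2 * B / (D * (D + 1) * A)"
  have "D * (D + 1) * A \<noteq> 0"
    using assms(1,2) by simp
  then have t: "D * (D + 1) * A * t = D * (D + 1) * A + b\<^sup>2 * B"
    unfolding t_def by (simp add: distrib_left)
  have "(D + 1) * ((D - 1) * C - D * A * t) = 0"
    using t assms(4) by algebra
  then have "(D - 1) * C = D * A * t"
    using assms(1) by simp
  then have "C / A = D / (D - 1) * t"
    using assms(1,2) by (simp add: field_simps)
  have "(D * (D + 1) * A)\<^sup>2 * (D * (D + 2) * (t\<^sup>2 - t) - b\<^sup>2) = b\<^sup>2 * D * turan_gap D b A B"
    using t unfolding turan_gap_def by algebra
  moreover have "(D * (D + 1) * A)\<^sup>2 > 0"
    using assms(1,2) by simp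
  moreover have "b\<^sup>2 * D * turan_gap D b A B \<ge> 0"
    using assms(1,5) by simp
  ultimately have "b\<^sup>2 \<le> D * (D + 2) * (t\<^sup>2 - t)"
    by (metis diff_ge_0_iff_ge zero_le_mult_iff not_less)
  moreover have "t \<ge> 1"
    unfolding t_def using assms(1-3) by simp
  ultimately have "1/2 + sqrt (1/4 + b\<^sup>2 / (D * (D + 2))) \<le> t"
    using assms(1) by (intro half_plus_sqrt_le) simp_all
  then have "D / (D - 1) * (1/2 + sqrt (1/4 + b\<^sup>2 / (D * (D + 2)))) \<le> D / (D - 1) * t"
    using assms(1) by (intro mult_left_mono) simp_all
  then show ?thesis
    using \<open>C / A = D / (D - 1) * t\<close> by simp
qed

lemma turan_product:
  fixes D b A B C :: real
  assumes "D > 1" "(D + 1) * (D - 1) * C = b\<^sup>2 * B + D * (D + 1) * A"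
    and "turan_gap D b A B \<ge> 0"
  shows "B * C \<ge> A\<^sup>2 * (D * (D + 1) / ((D - 1) * (D + 2)))"
proof -
  have "(D + 1) * ((D - 1) * (D + 2) * (B * C) - D * (D + 1) * A\<^sup>2) = turan_gap D b A B"
    using assms(2) unfolding turan_gap_def by algebra
  moreover have "D + 1 > 0"
    using assms(1) by simp
  ultimately have "D * (D + 1) * A\<^sup>2 \<le> (D - 1) * (D + 2) * (B * C)"
    using assms(3) by (metis diff_ge_0_iff_ge zero_le_mult_iff not_less)
  then show ?thesis
    using assms(1) by (simp add: pos_divide_le_eq mult.commute)
qed

lemma J_pow_turan_gap_nonneg:
  assumes "p > 0" "b \<ge> 0"
  shows "turan_gap (2 * p + 1) b (J_pow p b) (J_pow (p + 1) b) \<ge> 0"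
proof (rule turan_gap_nonneg[where K = "J_moment p" and L = "J_moment (p + 1)"])
  show "(J_pow p has_real_derivative J_moment p t) (at t)"
    and "(J_pow (p + 1) has_real_derivative J_moment (p + 1) t) (at t)" for t
    using J_pow_has_derivative assms(1) by simp_all
  show "t * J_pow (p + 1) t = (2 * p + 1 + 1) * J_moment p t" for t
    using J_pow_succ_recurrence[OF assms(1)] by simp
  show "t * J_moment (p + 1) t = (2 * p + 1 + 1) * J_pow p t - (2 * p + 1 + 2) * J_pow (p + 1) t"
    for t
    using J_pow_pred_recurrence[of "p + 1" t] assms(1) by (simp add: algebra_simps)
  show "0 \<le> J_pow p t * J_pow (p + 1) t" for t
    using J_pow_pos assms(1) by (simp add: less_imp_le)
  show "-1 \<le> 2 * p + 1" "0 \<le> b"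
    using assms by simp_all
qed

theorem lemma2:
  fixes d :: int and b :: real
  assumes "d \<ge> 2" and "b \<ge> 0"
  shows "b\<^sup>2 * J (d+1) b = - real_of_int (d*(d+1)) * J (d-1) b + real_of_int ((d+1)*(d-1)) * J (d-3) b \<and>
    J (d-3) b / J (d-1) b \<ge> real_of_int d / real_of_int (d-1) * (1/2 + sqrt (1/4 + b\<^sup>2 / real_of_int (d*(d+2)))) \<and>
    J (d-1) b / J (d+1) b \<le> real_of_int (d+2) / real_of_int (d+1) * (1/2 + sqrt (1/4 + b\<^sup>2 / real_of_int (d*(d+2)))) \<and>
    J (d+1) b * J (d-3) b \<ge> (J (d-1) b)\<^sup>2 * (real_of_int (d*(d+1)) / real_of_int ((d-1)*(d+2)))"
proof -
  define D where "D = real_of_int d"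
  define p where "p = (D - 1) / 2"
  have "D > 1" "D > 0" "p > 0" "D = 2 * p + 1"
    using assms(1) by (simp_all add: D_def p_def field_simps)
  have J_eqs: "J (d - 1) b = J_pow p b" "J (d + 1) b = J_pow (p + 1) b"
    "J (d - 3) b = J_pow (p - 1) b"
    by (simp_all add: J_eq_J_pow D_def p_def field_simps)
  have casts: "real_of_int d = D" "real_of_int (d - 1) = D - 1" "real_of_int (d + 1) = D + 1"
    "real_of_int (d + 2) = D + 2" "real_of_int (d * (d + 1)) = D * (D + 1)"
    "real_of_int ((d + 1) * (d - 1)) = (D + 1) * (D - 1)"
    "real_of_int (d * (d + 2)) = D * (D + 2)" "real_of_int ((d - 1) * (d + 2)) = (D - 1) * (D + 2)"
    by (simp_all add: D_def)
  have recurrence: "(D + 1) * (D - 1) * J_pow (p - 1) b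
                      = b\<^sup>2 * J_pow (p + 1) b + D * (D + 1) * J_pow p b"
    using J_pow_three_term_recurrence[OF \<open>p > 0\<close>, of b] \<open>D = 2 * p + 1\<close>
    by (simp add: algebra_simps)
  have gap: "turan_gap D b (J_pow p b) (J_pow (p + 1) b) \<ge> 0"
    using J_pow_turan_gap_nonneg[OF \<open>p > 0\<close> assms(2)] \<open>D = 2 * p + 1\<close> by simp
  have A: "J_pow p b > 0" and B: "J_pow (p + 1) b > 0"
    using J_pow_pos \<open>p > 0\<close> by simp_all
  have "b\<^sup>2 * J_pow (p + 1) b
          = - (D * (D + 1)) * J_pow p b + (D + 1) * (D - 1) * J_pow (p - 1) b"
    using recurrence by simp
  moreover note turan_ratio_lower[OF \<open>D > 1\<close> A less_imp_le[OF B] recurrence gap]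
    turan_ratio_upper[OF \<open>D > 0\<close> B gap] turan_product[OF \<open>D > 1\<close> recurrence gap]
  ultimately show ?thesis
    unfolding J_eqs casts by blast
qed

end
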